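(* Let $G$ be a connected simple graph without bridges whose edge set is identified with $[d+1]$, let $B_1,\dots,B_n$ be the bases (spanning trees) of its graphic matroid, all of cardinality $k$, and let $P=\operatorname{tconv}(V)$ with $V=(-e_{B_1},\dots,-e_{B_n})$. Then the cornered hull of $P$ is the tropical standard simplex $\Delta^d=\operatorname{tconv}\{-e_1,\dots,-e_{d+1}\}$, and the $i$-th corner of $P$ is $c_i(V)=e_i$ (as a point of $\mathbb{T}^d$). Moreover $\operatorname{type}_V(e_i)=(T_1,\dots,T_{d+1})$ with $$T_j=\begin{cases}[n] & \text{if } j=i,\\ \{l\in[n]: j\in B_l \text{ and } i\notin B_l\} & \text{otherwise.}\end{cases}$$
   Context: Tropical arithmetic is min-plus: $a\oplus b=\min(a,b)$, $a\odot b=a+b$; $\mathbb{T}^d=\mathbb{R}^{d+1}/\mathbb{R}(1,\dots,1)$; $\operatorname{tconv}\{v_1,\dots,v_n\}=\{\bigoplus_l\lambda_l\odot v_l:\lambda_l\in\mathbb{R}\}$; $e_B=\sum_{i\in B}e_i$. For $m\in[d+1]$ let $\bar S_m=\{\xi\in\mathbb{T}^d:\xi_m=\min_i\xi_i\}$. The $m$-th corner of $\operatorname{tconv}(v_1,\dots,v_n)$ is $c_m(V)=\bigoplus_l(-v_{l,m})\odot v_l$, the $m$-th cornered halfspace is $c_m(V)+\bar S_m$, and the cornered hull is the intersection of all $d+1$ cornered halfspaces. For $V=(v_1,\dots,v_n)$ and $x\in\mathbb{T}^d$, $\operatorname{type}_V(x)=(T_1,\dots,T_{d+1})$ with $T_m=\{l\in[n]:v_l\in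 x+\bar S_m\}$. *)

theory Defs
  imports Complex_Main
begin

definition simple_graph :: "'a set \<Rightarrow> nat set \<Rightarrow> (nat \<Rightarrow> 'a set) \<Rightarrow> bool" where
  "simple_graph VV E ends \<longleftrightarrow> finite VV \<and> finite E \<and>
     (\<forall>e\<in>E. ends e \<subseteq> VV \<and> card (ends e) = 2) \<and> inj_on ends E"

definition adj :: "(nat \<Rightarrow> 'a set) \<Rightarrow> nat set \<Rightarrow> ('a \<times> 'a) set" where
  "adj ends F = {(u, v). \<exists>e\<in>F. ends e = {u, v}}"

definition connected_on :: "'a set \<Rightarrow> (nat \<Rightarrow> 'a set) \<Rightarrow> nat set \<Rightarrow> bool" where
  "connected_on VV ends F \<longleftrightarrow> VV \<noteq> {} \<and> (\<forall>u\<in>VV. \<forall>v\<in>VV. (u, v) \<in> (adj ends F)\<^sup>*)"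

definition has_cycle :: "(nat \<Rightarrow> 'a set) \<Rightarrow> nat set \<Rightarrow> bool" where
  "has_cycle ends F \<longleftrightarrow> (\<exists>vs. length vs \<ge> 3 \<and> distinct vs \<and>
     (\<forall>j < length vs. \<exists>e\<in>F. ends e = {vs ! j, vs ! ((j + 1) mod length vs)}))"

definition spanning_tree :: "'a set \<Rightarrow> (nat \<Rightarrow> 'a set) \<Rightarrow> nat set \<Rightarrow> nat set \<Rightarrow> bool" where
  "spanning_tree VV ends E B \<longleftrightarrow> B \<subseteq> E \<and> connected_on VV ends B \<and> \<not> has_cycle ends B"

definition bridgeless :: "'a set \<Rightarrow> (nat \<Rightarrow> 'a set) \<Rightarrow> nat set \<Rightarrow> bool" where
  "bridgeless VV ends E \<longleftrightarrow> (\<forall>e\<in>E. connected_on VV ends (E - {e}))"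

section \<open>Tropical (min-plus) notions in T^d, points represented by functions nat => real,
  coordinates indexed by {1..d+1}, considered modulo adding a constant\<close>

definition teq :: "nat \<Rightarrow> (nat \<Rightarrow> real) \<Rightarrow> (nat \<Rightarrow> real) \<Rightarrow> bool" where
  "teq d x y \<longleftrightarrow> (\<exists>c. \<forall>i\<in>{1..d+1}. x i = y i + c)"

definition tconv :: "nat \<Rightarrow> nat \<Rightarrow> (nat \<Rightarrow> nat \<Rightarrow> real) \<Rightarrow> (nat \<Rightarrow> real) set" where
  "tconv d n v = {x. \<exists>lam :: nat \<Rightarrow> real. \<forall>i\<in>{1..d+1}. x i = Min ((\<lambda>l. lam l + v l i) ` {1..n})}"

definition Sbar :: "nat \<Rightarrow> nat \<Rightarrow> (nat \<Rightarrow> real) set" where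
  "Sbar d m = {\<xi>. \<xi> m = Min (\<xi> ` {1..d+1})}"

definition sector :: "nat \<Rightarrow> (nat \<Rightarrow> real) \<Rightarrow> nat \<Rightarrow> (nat \<Rightarrow> real) set" where
  "sector d x m = {y. (\<lambda>i. y i - x i) \<in> Sbar d m}"

definition corner :: "nat \<Rightarrow> (nat \<Rightarrow> nat \<Rightarrow> real) \<Rightarrow> nat \<Rightarrow> (nat \<Rightarrow> real)" where
  "corner n v m = (\<lambda>i. Min ((\<lambda>l. (- v l m) + v l i) ` {1..n}))"

definition cornered_hull :: "nat \<Rightarrow> nat \<Rightarrow> (nat \<Rightarrow> nat \<Rightarrow> real) \<Rightarrow> (nat \<Rightarrow> real) set" where
  "cornered_hull d n v = (\<Inter>m\<in>{1..d+1}. sector d (corner n v m) m)"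

definition ttype :: "nat \<Rightarrow> nat \<Rightarrow> (nat \<Rightarrow> nat \<Rightarrow> real) \<Rightarrow> (nat \<Rightarrow> real) \<Rightarrow> nat \<Rightarrow> nat set" where
  "ttype d n v x m = {l\<in>{1..n}. v l \<in> sector d x m}"

definition indvec :: "nat set \<Rightarrow> nat \<Rightarrow> real" where
  "indvec B = (\<lambda>i. if i \<in> B then 1 else 0)"

definition trop_simplex :: "nat \<Rightarrow> (nat \<Rightarrow> real) set" where
  "trop_simplex d = tconv d (d+1) (\<lambda>l. - indvec {l})"

end

theory Submission
  imports Defs
begin

text \<open>Deleting an edge that lies on a cycle keeps a graph connected, so pruning cycles turns any
  connected edge set into a spanning tree containing a prescribed edge. In a bridgeless graph,
  doing this in the graph without edge m yields, for distinct edges k and m, a spanning tree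
  containing k but not m. Hence for all coordinates m \<noteq> k some -e_B has its m-th entry exactly
  one below its k-th, which makes the m-th corner e_m - 1, i.e. e_m in the tropical torus; the
  m-th cornered halfspace is then y_m \<le> y_k + 1 for all k, and these inequalities cut out the
  tropical standard simplex.\<close>

lemma sym_adj: "sym (adj ends F)"
  unfolding adj_def sym_def by (auto simp: insert_commute)

lemma adj_subset_rtrancl_Diff_cycle_edge:
  assumes len: "3 \<le> length vs" and dist: "distinct vs"
    and cyc: "\<forall>k < length vs. \<exists>e'\<in>F. ends e' = {vs ! k, vs ! ((k + 1) mod length vs)}"
    and j: "j < length vs" and e: "ends e = {vs ! j, vs ! ((j + 1) mod length vs)}"
  shows "adj ends F \<subseteq> (adj ends (F - {e}))\<^sup>*"
proof -
  define L where "L = length vs"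
  define W where "W = adj ends (F - {e})"
  have L: "3 \<le> L" "j < L" using len j by (simp_all add: L_def)
  have idx: "a = b" if "a < L" "b < L" "vs ! a = vs ! b" for a b
    using that dist nth_eq_iff_index_eq L_def by blast
  have step: "(vs ! k, vs ! ((k + 1) mod L)) \<in> W" if k: "k < L" "k \<noteq> j" for k
  proof -
    obtain e' where e': "e' \<in> F" "ends e' = {vs ! k, vs ! ((k + 1) mod L)}"
      using cyc k L_def by auto
    have "e' \<noteq> e"
    proof
      assume "e' = e"
      with e e' have "{vs ! k, vs ! ((k + 1) mod L)} = {vs ! j, vs ! ((j + 1) mod L)}"
        by (simp add: L_def)
      moreover have "vs ! k \<noteq> vs ! j"
        using idx k L by blast
      ultimately have "vs ! k = vs ! ((j + 1) mod L)" "vs ! ((k + 1) mod L) = vs ! j"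
        unfolding doubleton_eq_iff by blast+
      moreover have "(j + 1) mod L < L" "(k + 1) mod L < L"
        using L by simp_all
      ultimately have "k = (j + 1) mod L" "(k + 1) mod L = j"
        using idx k(1) L(2) by blast+
      then have "(j + 2) mod L = j mod L"
        using L by (simp add: mod_Suc_eq)
      then have "L dvd 2"
        using mod_eq_dvd_iff_nat[of j "j + 2" L] by simp
      then have "L \<le> 2"
        by (rule dvd_imp_le) simp
      with L show False
        by simp
    qed
    with e' show ?thesis
      unfolding W_def adj_def by auto
  qed
  \<comment> \<open>the rest of the cycle is a walk between the endpoints of e\<close>
  have walk: "(vs ! ((j + 1) mod L), vs ! ((j + 1 + t) mod L)) \<in> W\<^sup>*" if "t < L" for t
    using that
  proof (induction t)
    case (Suc t)
    have "(j + 1 + t) mod L \<noteq> j mod L"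
    proof
      assume "(j + 1 + t) mod L = j mod L"
      then have "L dvd Suc t"
        using mod_eq_dvd_iff_nat[of j "j + 1 + t" L] by simp
      then have "L \<le> Suc t"
        by (rule dvd_imp_le) simp
      with Suc.prems show False
        by simp
    qed
    then have "(vs ! ((j + 1 + t) mod L), vs ! (((j + 1 + t) mod L + 1) mod L)) \<in> W"
      using step L by simp
    then show ?case
      using Suc by (auto simp: mod_Suc_eq intro: rtrancl_into_rtrancl)
  qed simp
  have backward: "(vs ! ((j + 1) mod L), vs ! j) \<in> W\<^sup>*"
    using walk[of "L - 1"] L by simp
  have "sym (W\<^sup>*)"
    unfolding W_def by (intro sym_rtrancl sym_adj)
  then have forward: "(vs ! j, vs ! ((j + 1) mod L)) \<in> W\<^sup>*"
    using backward by (rule symD)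
  show ?thesis
    unfolding W_def[symmetric]
  proof
    fix x assume "x \<in> adj ends F"
    then obtain u v e' where x: "x = (u, v)" "e' \<in> F" "ends e' = {u, v}"
      unfolding adj_def by auto
    show "x \<in> W\<^sup>*"
    proof (cases "e' = e")
      case False
      with x show ?thesis unfolding W_def adj_def by auto
    next
      case True
      with x e backward forward show ?thesis
        by (auto simp: doubleton_eq_iff L_def)
    qed
  qed
qed

lemma has_cycle_obtains_removable_edge:
  assumes "has_cycle ends F"
  obtains e where "e \<in> F" "e \<noteq> i" "adj ends F \<subseteq> (adj ends (F - {e}))\<^sup>*"
proof -
  obtain vs where len: "3 \<le> length vs" and dist: "distinct vs"
    and cyc: "\<forall>k < length vs. \<exists>e\<in>F. ends e = {vs ! k, vs ! ((k + 1) mod length vs)}"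
    using assms unfolding has_cycle_def by blast
  have mod: "(0 + 1) mod length vs = 1" "(1 + 1) mod length vs = 2"
    using len by simp_all
  have lt: "0 < length vs" "1 < length vs" "2 < length vs"
    using len by linarith+
  then obtain e0 e1 where e0: "e0 \<in> F" "ends e0 = {vs ! 0, vs ! ((0 + 1) mod length vs)}"
    and e1: "e1 \<in> F" "ends e1 = {vs ! 1, vs ! ((1 + 1) mod length vs)}"
    using cyc lt(1,2) by blast
  \<comment> \<open>two consecutive edges of a cycle are distinct, so one of them differs from i\<close>
  have "vs ! 0 \<notin> {vs ! 1, vs ! 2}"
    using dist lt by (simp add: nth_eq_iff_index_eq)
  with e0 e1 mod have "e0 \<noteq> e1"
    by auto
  then consider (first) "e0 \<noteq> i" | (second) "e1 \<noteq> i"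
    by blast
  then show ?thesis
  proof cases
    case first
    show ?thesis
      using adj_subset_rtrancl_Diff_cycle_edge[OF len dist cyc lt(1) e0(2)]
      by (rule that[OF e0(1) first])
  next
    case second
    show ?thesis
      using adj_subset_rtrancl_Diff_cycle_edge[OF len dist cyc lt(2) e1(2)]
      by (rule that[OF e1(1) second])
  qed
qed

lemma acyclic_connected_subset_containing:
  assumes "finite F" "i \<in> F" "connected_on VV ends F"
  shows "\<exists>B\<subseteq>F. i \<in> B \<and> connected_on VV ends B \<and> \<not> has_cycle ends B"
  using assms
proof (induction "card F" arbitrary: F rule: less_induct)
  case less
  show ?case
  proof (cases "has_cycle ends F")
    case False
    with less.prems show ?thesis
      by blast
  next
    case True
    then obtain e where e: "e \<in> F" "e \<noteq> i" "adj ends F \<subseteq> (adj ends (F - {e}))\<^sup>*"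
      by (rule has_cycle_obtains_removable_edge)
    then have "(adj ends F)\<^sup>* \<subseteq> (adj ends (F - {e}))\<^sup>*"
      using rtrancl_subset_rtrancl by blast
    with less.prems(3) have conn: "connected_on VV ends (F - {e})"
      unfolding connected_on_def by blast
    have card: "card (F - {e}) < card F"
      using less.prems(1) e(1) by (rule card_Diff1_less)
    have "finite (F - {e})" "i \<in> F - {e}"
      using less.prems e by auto
    then have "\<exists>B\<subseteq>F - {e}. i \<in> B \<and> connected_on VV ends B \<and> \<not> has_cycle ends B"
      using less.hyps[OF card] conn by blast
    then show ?thesis
      by blast
  qed
qed

lemma bridgeless_obtains_spanning_tree_avoiding:
  assumes "finite E" "bridgeless VV ends E" "i \<in> E" "m \<in> E" "i \<noteq> m"
  obtains B where "spanning_tree VV ends E B" "i \<in> B" "m \<notin> B"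
proof -
  have "connected_on VV ends (E - {m})"
    using assms unfolding bridgeless_def by blast
  then obtain B where "B \<subseteq> E - {m}" "i \<in> B" "connected_on VV ends B" "\<not> has_cycle ends B"
    using acyclic_connected_subset_containing[of "E - {m}" i VV ends] assms by blast
  then show ?thesis
    by (intro that) (auto simp: spanning_tree_def)
qed

lemma mem_sector_iff:
  assumes "m \<in> {1..d+1}"
  shows "y \<in> sector d x m \<longleftrightarrow> (\<forall>k\<in>{1..d+1}. y m - x m \<le> y k - x k)"
  using assms unfolding sector_def Sbar_def
  by (auto simp: eq_commute[of _ "Min _"] Min_eq_iff)

lemma corner_neg_indvec:
  assumes "{1..n} \<noteq> {}"
    and separating: "k \<noteq> m \<Longrightarrow> \<exists>l\<in>{1..n}. k \<in> Bs l \<and> m \<notin> Bs l"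
  shows "corner n (\<lambda>l. - indvec (Bs l)) m k = (if k = m then 0 else -1)"
proof -
  have corner: "corner n (\<lambda>l. - indvec (Bs l)) m k
      = Min ((\<lambda>l. indvec (Bs l) m - indvec (Bs l) k) ` {1..n})"
    unfolding corner_def by simp
  show ?thesis
  proof (cases "k = m")
    case True
    with assms(1) show ?thesis
      unfolding corner by (simp add: image_constant_conv)
  next
    case False
    then obtain l where "l \<in> {1..n}" "k \<in> Bs l" "m \<notin> Bs l"
      using separating by blast
    then have "Min ((\<lambda>l. indvec (Bs l) m - indvec (Bs l) k) ` {1..n}) = -1"
      by (intro Min_eqI) (auto simp: indvec_def intro!: image_eqI[where x = l])
    with False show ?thesis
      unfolding corner by simp
  qed
qed

lemma trop_simplex_eq:
  "trop_simplex d = {y. \<forall>m\<in>{1..d+1}. \<forall>k\<in>{1..d+1}. y m \<le> y k + 1}"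
proof (intro set_eqI iffI)
  fix x assume "x \<in> trop_simplex d"
  then obtain lam where lam: "\<forall>i\<in>{1..d+1}. x i = Min ((\<lambda>l. lam l - indvec {l} i) ` {1..d+1})"
    unfolding trop_simplex_def tconv_def by auto
  define \<mu> where "\<mu> = Min (lam ` {1..d+1})"
  have "\<mu> \<in> lam ` {1..d+1}"
    unfolding \<mu>_def by (rule Min_in) auto
  then obtain l where l: "l \<in> {1..d+1}" "\<mu> = lam l"
    by auto
  have upper: "x i \<le> \<mu>" if "i \<in> {1..d+1}" for i
  proof -
    have "x i \<le> lam l - indvec {l} i"
      using lam that l by simp
    with l show ?thesis
      by (simp add: indvec_def split: if_splits)
  qed
  have lower: "\<mu> - 1 \<le> x i" if "i \<in> {1..d+1}" for i
  proof -
    have "\<mu> - 1 \<le> lam l' - indvec {l'} i" if "l' \<in> {1..d+1}" for l'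
    proof -
      have "\<mu> \<le> lam l'"
        using that unfolding \<mu>_def by simp
      then show ?thesis
        by (simp add: indvec_def)
    qed
    then show ?thesis
      using lam that by simp
  qed
  show "x \<in> {y. \<forall>m\<in>{1..d+1}. \<forall>k\<in>{1..d+1}. y m \<le> y k + 1}"
    using upper lower by fastforce
next
  fix y :: "nat \<Rightarrow> real"
  assume y: "y \<in> {y. \<forall>m\<in>{1..d+1}. \<forall>k\<in>{1..d+1}. y m \<le> y k + 1}"
  \<comment> \<open>y is the tropical combination with coefficients y l + 1; the minimum is attained at l = i\<close>
  have "y i = Min ((\<lambda>l. (y l + 1) - indvec {l} i) ` {1..d+1})" if "i \<in> {1..d+1}" for i
    using y that by (intro Min_eqI[symmetric]) (auto simp: indvec_def intro!: image_eqI[where x = i])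
  then show "y \<in> trop_simplex d"
    unfolding trop_simplex_def tconv_def by (intro CollectI exI[of _ "\<lambda>l. y l + 1"]) simp
qed

lemma cornered_hull_eq_trop_simplex:
  assumes corners: "\<forall>m\<in>{1..d+1}. \<forall>k\<in>{1..d+1}. corner n v m k = (if k = m then 0 else -1)"
  shows "cornered_hull d n v = trop_simplex d"
proof -
  have "y \<in> sector d (corner n v m) m \<longleftrightarrow> (\<forall>k\<in>{1..d+1}. y m \<le> y k + 1)"
    if m: "m \<in> {1..d+1}" for y m
  proof -
    have "y m - corner n v m m \<le> y k - corner n v m k \<longleftrightarrow> y m \<le> y k + 1"
      if "k \<in> {1..d+1}" for k
      using corners m that by (cases "k = m") auto
    with m show ?thesis
      by (simp add: mem_sector_iff)
  qed
  then show ?thesis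
    unfolding cornered_hull_def trop_simplex_eq by auto
qed

lemma ttype_neg_indvec:
  assumes "i \<in> {1..d+1}" "j \<in> {1..d+1}"
  shows "ttype d n (\<lambda>l. - indvec (Bs l)) (indvec {i}) j =
           (if j = i then {1..n} else {l\<in>{1..n}. j \<in> Bs l \<and> i \<notin> Bs l})"
proof -
  have sector: "- indvec B \<in> sector d (indvec {i}) j \<longleftrightarrow>
      (\<forall>k\<in>{1..d+1}. indvec B k + indvec {i} k \<le> indvec B j + indvec {i} j)" for B
    using assms(2) by (auto simp: mem_sector_iff)
  show ?thesis
  proof (cases "j = i")
    case True
    then show ?thesis
      unfolding ttype_def sector by (auto simp: indvec_def)
  next
    case False
    \<comment> \<open>only the coordinate k = i can violate the inequality\<close>
    have "- indvec B \<in> sector d (indvec {i}) j \<longleftrightarrow> j \<in> B \<and> i \<notin> B" for B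
      unfolding sector using assms False
      by (auto simp: indvec_def split: if_splits dest: bspec[of _ _ i])
    with False show ?thesis
      unfolding ttype_def by auto
  qed
qed

theorem mainTheorem6:
  fixes VV :: "'a set" and ends :: "nat \<Rightarrow> 'a set" and d n :: nat
    and Bs :: "nat \<Rightarrow> nat set"
  assumes graph: "simple_graph VV {1..d+1} ends"
    and conn: "connected_on VV ends {1..d+1}"
    and nobridge: "bridgeless VV ends {1..d+1}"
    and bases_inj: "inj_on Bs {1..n}"
    and bases: "Bs ` {1..n} = {B. spanning_tree VV ends {1..d+1} B}"
  shows "cornered_hull d n (\<lambda>l. - indvec (Bs l)) = trop_simplex d
     \<and> (\<forall>i\<in>{1..d+1}. teq d (corner n (\<lambda>l. - indvec (Bs l)) i) (indvec {i})
        \<and> (\<forall>j\<in>{1..d+1}. ttype d n (\<lambda>l. - indvec (Bs l)) (indvec {i}) j =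
              (if j = i then {1..n} else {l\<in>{1..n}. j \<in> Bs l \<and> i \<notin> Bs l})))"
proof -
  let ?v = "\<lambda>l. - indvec (Bs l)"
  have finite: "finite {1..d+1}" by simp
  have tree_is_basis: "spanning_tree VV ends {1..d+1} B \<Longrightarrow> \<exists>l\<in>{1..n}. B = Bs l" for B
    using bases by blast
  obtain B where "spanning_tree VV ends {1..d+1} B"
    using acyclic_connected_subset_containing[OF finite _ conn, of 1]
    unfolding spanning_tree_def by auto
  then have nonempty: "{1..n} \<noteq> {}"
    using tree_is_basis by blast
  have separating: "\<exists>l\<in>{1..n}. k \<in> Bs l \<and> m \<notin> Bs l"
    if edges: "k \<in> {1..d+1}" "m \<in> {1..d+1}" "k \<noteq> m" for k m
  proof -
    obtain B where "spanning_tree VV ends {1..d+1} B" "k \<in> B" "m \<notin> B"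
      by (rule bridgeless_obtains_spanning_tree_avoiding[OF finite nobridge edges])
    with tree_is_basis show ?thesis
      by blast
  qed
  have corners: "\<forall>m\<in>{1..d+1}. \<forall>k\<in>{1..d+1}. corner n ?v m k = (if k = m then 0 else -1)"
    by (intro ballI corner_neg_indvec[OF nonempty separating])
  then have "teq d (corner n ?v i) (indvec {i})" if "i \<in> {1..d+1}" for i
    using that unfolding teq_def by (intro exI[of _ "-1"]) (auto simp: indvec_def)
  then show ?thesis
    using cornered_hull_eq_trop_simplex[OF corners] ttype_neg_indvec by blast
qed

end
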